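(* Let $k\in\{0,1,-1\}$, let $c\neq0$, $m\ge0$ and $a_1,a_2,a_3$ be real, $\hat a=(a_1,a_2,a_3)^T$, and consider the complex system for $\hat K=(K_1,K_2,K_3)^T$, $\hat P=(P_1,P_2,P_3)^T$ in complex time $t$: $$\frac{d\hat K}{dt}=\hat K\times\omega(\hat K)+\hat P\times\hat a,\qquad \frac{d\hat P}{dt}=\hat P\times\omega(\hat K)+k\,(\hat K\times\hat a),\qquad \omega(\hat K)=\Big(\frac{m}{c}K_1,\frac{m}{c}K_2,\frac1cK_3\Big)^T.$$ Suppose a solution is given near $t=0$ by Laurent series $\hat K(t)=t^{-n_1}(K_0+K_1t+K_2t^2+\cdots)$, $\hat P(t)=t^{-n_2}(P_0+P_1t+\cdots)$ with $n_1,n_2$ positive integers, $K_n,P_n\in\mathbb{C}^3$, $K_0\neq0$, $P_0\neq0$. If $\omega(K_0)\times P_0\neq0$, then $n_1=1$ and $n_2=2$.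
   Context: $\times$ is the (complex bilinear) vector product on $\mathbb{C}^3$. The system is the complexification of the Hamiltonian equations for $H=\frac12\big(\frac{H_1^2}{c_1}+\frac{H_2^2}{c_2}+\frac{H_3^2}{c_3}\big)+a\cdot h$ with $c_1=c_2=c/m$, $c_3=c$ ($m=0$ meaning $1/c_1=1/c_2=0$). *)

theory Defs
  imports "HOL-Analysis.Analysis"
begin

definition cvcross :: "complex^3 \<Rightarrow> complex^3 \<Rightarrow> complex^3" where
  "cvcross u v = (\<chi> i. if i = 1 then u$2 * v$3 - u$3 * v$2
                      else if i = 2 then u$3 * v$1 - u$1 * v$3
                      else u$1 * v$2 - u$2 * v$1)"

definition omega :: "real \<Rightarrow> real \<Rightarrow> complex^3 \<Rightarrow> complex^3" where
  "omega m c K = (\<chi> i. if i = 3 then K$3 / complex_of_real c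
                       else complex_of_real (m / c) * K$i)"

definition cvec :: "real^3 \<Rightarrow> complex^3" where
  "cvec a = (\<chi> i. complex_of_real (a$i))"

definition laurent :: "nat \<Rightarrow> (nat \<Rightarrow> complex^3) \<Rightarrow> complex \<Rightarrow> complex^3" where
  "laurent n X t = (t powi (- int n)) *s (\<Sum>j. (t ^ j) *s X j)"

end

theory Submission
  imports Defs
begin

(* Write K(t) = t^-n1 F(t) and P(t) = t^-n2 G(t) with F, G holomorphic near 0, F(0) = K0,
   G(0) = P0. Multiplying the P-equation by t^(n1+n2) and letting t -> 0 gives
   -n2 0^(n1-1) P0 = P0 x omega(K0); as omega(K0) x P0 is nonzero, n1 = 1 and P0 is an
   eigenvector of the map (. x omega(K0)) for the eigenvalue -n2.
   With n1 = 1 the K-equation multiplied by t^2 yields -K0 = K0 x omega(K0), which forces K0 = 0,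
   unless the coupling term P x a survives in the limit, i.e. unless a is nonzero and n2 >= 2.
   For n2 >= 3, multiplying by t^n2 instead gives P0 x a = 0, and for real nonzero a this is
   incompatible with the eigenvector equation. *)

lemma cvcross_smult_left: "cvcross (x *s u) v = x *s cvcross u v"
  by (simp add: vec_eq_iff cvcross_def algebra_simps)

lemma cvcross_smult_right: "cvcross u (x *s v) = x *s cvcross u v"
  by (simp add: vec_eq_iff cvcross_def algebra_simps)

lemma cvcross_commute: "cvcross u v = - cvcross v u"
  by (simp add: vec_eq_iff cvcross_def algebra_simps)

lemma cvcross_cvec_0 [simp]: "cvcross u (cvec 0) = 0"
  by (simp add: vec_eq_iff cvcross_def cvec_def)

lemma omega_smult: "omega m c (x *s u) = x *s omega m c u"
  by (simp add: vec_eq_iff omega_def algebra_simps)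

lemma isCont_cvcross [continuous_intros]:
  "isCont u t \<Longrightarrow> isCont v t \<Longrightarrow> isCont (\<lambda>s. cvcross (u s) (v s)) t"
  unfolding isCont_def cvcross_def
  by (intro tendsto_vec_lambda) (auto intro!: tendsto_intros)

lemma isCont_omega [continuous_intros]: "isCont u t \<Longrightarrow> isCont (\<lambda>s. omega m c (u s)) t"
  unfolding isCont_def omega_def
  by (intro tendsto_vec_lambda) (auto simp: divide_inverse intro!: tendsto_intros)

lemma isCont_smult [continuous_intros]:
  fixes u :: "'a::t2_space \<Rightarrow> 'b::real_normed_field^'n"
  shows "isCont f t \<Longrightarrow> isCont u t \<Longrightarrow> isCont (\<lambda>s. f s *s u s) t"
  unfolding isCont_def vector_scalar_mult_def
  by (intro tendsto_vec_lambda) (auto intro!: tendsto_intros)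

lemma smult_lcommute:
  fixes x y :: "'a::comm_semiring"
  shows "x *s (y *s v) = y *s (x *s v)"
  by (simp add: mult.commute)

lemma power_smult_inverse_power:
  fixes t :: "'a::field"
  assumes "t \<noteq> 0" "n \<le> N"
  shows "t ^ N *s (inverse (t ^ n) *s v) = t ^ (N - n) *s v"
  using assms by (simp add: vector_smult_assoc power_diff divide_inverse)

lemma eventually_at_0_if_punctured_disc:
  assumes "r > 0" "\<And>t. 0 < norm t \<Longrightarrow> norm t < r \<Longrightarrow> P t"
  shows "\<forall>\<^sub>F t in at (0::'a::real_normed_vector). P t"
  unfolding eventually_at using assms by (auto simp: dist_norm)

lemma eventually_eq_imp_eq_at:
  fixes A B :: "'a::{t2_space, perfect_space} \<Rightarrow> 'b::t2_space"
  assumes "\<forall>\<^sub>F t in at x. A t = B t" "isCont A x" "isCont B x"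
  shows "A x = B x"
  using eventually_nhds_x_imp_x[OF at_within_isCont_imp_nhds[OF assms]] .

definition cdot :: "complex^3 \<Rightarrow> complex^3 \<Rightarrow> complex" where
  "cdot u v = u$1 * v$1 + u$2 * v$2 + u$3 * v$3"

lemma cdot_cvcross_cycle: "cdot u (cvcross v w) = cdot w (cvcross u v)"
  by (simp add: cdot_def cvcross_def algebra_simps)

lemma cvcross_cvcross: "cvcross u (cvcross v w) = cdot u w *s v - cdot u v *s w"
  by (simp add: vec_eq_iff forall_3 cdot_def cvcross_def algebra_simps)

lemma cdot_cvec_self: "cdot (cvec a) (cvec a) = of_real (norm a ^ 2)"
  by (simp add: cdot_def cvec_def norm_vec_def L2_set_def sum_3 power2_eq_square)

lemma cvcross_omega_self_eq_neg_imp_0: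
  assumes "cvcross K (omega m c K) = - K"
  shows "K = 0"
proof -
  have eq: "cvcross K (omega m c K) $ i = - K $ i" for i
    using assms by simp
  have "K $ 3 = 0"
    using eq[of 3] by (simp add: cvcross_def omega_def algebra_simps)
  with eq[of 1] eq[of 2] show ?thesis
    by (simp add: vec_eq_iff forall_3 cvcross_def omega_def)
qed

(* Realness of a is essential: a nonzero complex vector may satisfy cdot u u = 0. *)
lemma eigenvector_parallel_to_real_eq_0:
  assumes eigen: "cvcross P w = z *s P" and "z \<noteq> 0"
    and parallel: "cvcross P (cvec a) = 0" and "a \<noteq> 0"
  shows "P = 0"
proof -
  have "z * cdot (cvec a) P = cdot (cvec a) (cvcross P w)"
    by (simp add: eigen cdot_def algebra_simps)
  also have "\<dots> = cdot w (- cvcross P (cvec a))"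
    by (simp only: cdot_cvcross_cycle cvcross_commute[of "cvec a" P])
  also have "\<dots> = 0"
    using parallel by (simp add: cdot_def)
  finally have orth: "cdot (cvec a) P = 0"
    using \<open>z \<noteq> 0\<close> by simp
  have "cdot (cvec a) (cvec a) *s P
      = cvcross (cvec a) (cvcross P (cvec a)) + cdot (cvec a) P *s cvec a"
    by (simp add: cvcross_cvcross)
  then have "cdot (cvec a) (cvec a) *s P = 0"
    using parallel orth by (simp add: vec_eq_iff cvcross_def)
  with \<open>a \<noteq> 0\<close> show ?thesis
    by (simp add: cdot_cvec_self vector_mul_eq_0)
qed

lemma DERIV_inverse_power:
  fixes t :: "'a::real_normed_field"
  assumes "t \<noteq> 0"
  shows "((\<lambda>s. inverse (s ^ n)) has_field_derivative - of_nat n * inverse (t ^ (n + 1))) (at t)"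
proof (rule DERIV_cong[OF DERIV_inverse_fun[OF DERIV_power[OF DERIV_ident]]])
  show "t ^ n \<noteq> 0"
    using assms by simp
  show "- (of_nat n * (1 * t ^ (n - Suc 0)) * inverse ((t ^ n) ^ Suc (Suc 0))) =
    - of_nat n * inverse (t ^ (n + 1))"
    using assms by (cases n) (simp_all add: field_simps)
qed

(* Summed componentwise, so that the scalar power series theory (termdiffs) applies. *)
definition vpowser :: "(nat \<Rightarrow> complex^3) \<Rightarrow> complex \<Rightarrow> complex^3" where
  "vpowser X t = (\<chi> i. \<Sum>j. X j $ i * t ^ j)"

lemma vpowser_0 [simp]: "vpowser X 0 = X 0"
  by (simp add: vpowser_def vec_eq_iff)

lemma diffs_vec_nth [simp]: "diffs X n $ i = diffs (\<lambda>j. X j $ i) n"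
  by (simp add: diffs_def of_nat_index)

lemma summable_powser_vec_nth:
  fixes X :: "nat \<Rightarrow> complex^3"
  assumes "\<And>t. 0 < norm t \<Longrightarrow> norm t < r \<Longrightarrow> summable (\<lambda>j. t ^ j *s X j)" and "norm t < r"
  shows "summable (\<lambda>j. X j $ i * t ^ j)"
proof (cases "t = 0")
  case False
  then have "summable (\<lambda>j. t ^ j *s X j)"
    using assms by simp
  from bounded_linear.summable[OF bounded_linear_vec_nth[of i] this] show ?thesis
    by (simp add: mult.commute)
qed simp

lemma summable_powser_diffs_vec_nth:
  fixes X :: "nat \<Rightarrow> complex^3"
  assumes "\<And>i t. norm t < r \<Longrightarrow> summable (\<lambda>j. X j $ i * t ^ j)" and "norm t < r"
  shows "summable (\<lambda>j. diffs X j $ i * t ^ j)"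
  using termdiff_converges[OF \<open>norm t < r\<close>] assms(1) by simp

lemma vpowser_vec_nth_has_field_derivative:
  assumes "\<And>i t. norm t < r \<Longrightarrow> summable (\<lambda>j. X j $ i * t ^ j)" and "norm t < r"
  shows "((\<lambda>s. vpowser X s $ i) has_field_derivative vpowser (diffs X) t $ i) (at t)"
  unfolding vpowser_def using assms by (auto intro!: termdiffs_strong'[of r])

lemma isCont_vpowser:
  assumes "\<And>i t. norm t < r \<Longrightarrow> summable (\<lambda>j. X j $ i * t ^ j)" and "norm t < r"
  shows "isCont (vpowser X) t"
  unfolding isCont_def
  by (rule vec_tendstoI)
    (use DERIV_isCont[OF vpowser_vec_nth_has_field_derivative[OF assms]] in \<open>simp add: isCont_def\<close>)

lemma laurent_eq_vpowser:
  assumes "\<And>t. 0 < norm t \<Longrightarrow> norm t < r \<Longrightarrow> summable (\<lambda>j. t ^ j *s X j)"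
    and "0 < norm t" "norm t < r"
  shows "laurent n X t = inverse (t ^ n) *s vpowser X t"
proof -
  have "(\<Sum>j. t ^ j *s X j) $ i = (\<Sum>j. X j $ i * t ^ j)" for i
    using bounded_linear.suminf[OF bounded_linear_vec_nth assms(1)[OF assms(2,3)]]
    by (simp add: mult.commute)
  then show ?thesis
    by (simp add: laurent_def vpowser_def vec_eq_iff power_int_minus)
qed

lemma laurent_vec_nth_has_field_derivative:
  fixes X :: "nat \<Rightarrow> complex^3"
  assumes summable: "\<And>t. 0 < norm t \<Longrightarrow> norm t < r \<Longrightarrow> summable (\<lambda>j. t ^ j *s X j)"
    and t: "0 < norm t" "norm t < r"
  shows "((\<lambda>s. laurent n X s $ i) has_field_derivative
           (inverse (t ^ (n + 1)) *s (- of_nat n *s vpowser X t)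
            + inverse (t ^ n) *s vpowser (diffs X) t) $ i) (at t)"
proof -
  have summable_nth: "\<And>i t. norm t < r \<Longrightarrow> summable (\<lambda>j. X j $ i * t ^ j)"
    by (rule summable_powser_vec_nth[of r]) (use summable in auto)
  have "t \<noteq> 0"
    using t by auto
  from DERIV_mult[OF DERIV_inverse_power[OF this, of n]
      vpowser_vec_nth_has_field_derivative[OF summable_nth t(2), of i]]
  have "((\<lambda>s. inverse (s ^ n) * vpowser X s $ i) has_field_derivative
          (inverse (t ^ (n + 1)) *s (- of_nat n *s vpowser X t)
            + inverse (t ^ n) *s vpowser (diffs X) t) $ i) (at t)"
    by (simp add: ac_simps)
  then show ?thesis
  proof (rule has_field_derivative_transform_within_open[where S = "ball 0 r - {0}"])
    show "inverse (s ^ n) * vpowser X s $ i = laurent n X s $ i" if "s \<in> ball 0 r - {0}" for s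
    proof -
      have "0 < norm s" "norm s < r"
        using that by (simp_all add: dist_norm)
      from laurent_eq_vpowser[OF summable this] show ?thesis
        by simp
    qed
  next
    show "open (ball 0 r - {0})"
      by (simp add: open_Diff)
  next
    show "t \<in> ball 0 r - {0}"
      using t by simp
  qed
qed

locale laurent_solution =
  fixes m c k :: real and a :: "real^3" and n1 n2 :: nat and K P :: "nat \<Rightarrow> complex^3" and r :: real
  assumes r_pos: "r > 0" and n1_pos: "n1 \<ge> 1" and n2_pos: "n2 \<ge> 1"
    and summable_K: "\<And>t. 0 < norm t \<Longrightarrow> norm t < r \<Longrightarrow> summable (\<lambda>j. t ^ j *s K j)"
    and summable_P: "\<And>t. 0 < norm t \<Longrightarrow> norm t < r \<Longrightarrow> summable (\<lambda>j. t ^ j *s P j)"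
    and ode_K: "\<And>t i. 0 < norm t \<Longrightarrow> norm t < r \<Longrightarrow>
      ((\<lambda>s. laurent n1 K s $ i) has_field_derivative
         (cvcross (laurent n1 K t) (omega m c (laurent n1 K t))
          + cvcross (laurent n2 P t) (cvec a)) $ i) (at t)"
    and ode_P: "\<And>t i. 0 < norm t \<Longrightarrow> norm t < r \<Longrightarrow>
      ((\<lambda>s. laurent n2 P s $ i) has_field_derivative
         (cvcross (laurent n2 P t) (omega m c (laurent n1 K t))
          + complex_of_real k *s cvcross (laurent n1 K t) (cvec a)) $ i) (at t)"
begin

abbreviation "F \<equiv> vpowser K"
abbreviation "F' \<equiv> vpowser (diffs K)"
abbreviation "G \<equiv> vpowser P"
abbreviation "G' \<equiv> vpowser (diffs P)"

lemma isCont_regular_parts [continuous_intros]: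
  "isCont F 0" "isCont F' 0" "isCont G 0" "isCont G' 0"
proof -
  have K: "\<And>i t. norm t < r \<Longrightarrow> summable (\<lambda>j. K j $ i * t ^ j)"
    by (rule summable_powser_vec_nth[of r]) (use summable_K in auto)
  have P: "\<And>i t. norm t < r \<Longrightarrow> summable (\<lambda>j. P j $ i * t ^ j)"
    by (rule summable_powser_vec_nth[of r]) (use summable_P in auto)
  show "isCont F 0" "isCont F' 0" "isCont G 0" "isCont G' 0"
    using r_pos
    by (auto intro!: isCont_vpowser[of r] K P summable_powser_diffs_vec_nth[of r])
qed

lemma regular_K_eq:
  assumes t: "0 < norm t" "norm t < r"
  shows "inverse (t ^ (n1 + 1)) *s (- of_nat n1 *s F t) + inverse (t ^ n1) *s F' t
    = inverse (t ^ n1) *s (inverse (t ^ n1) *s cvcross (F t) (omega m c (F t)))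
      + inverse (t ^ n2) *s cvcross (G t) (cvec a)"
proof -
  have "inverse (t ^ (n1 + 1)) *s (- of_nat n1 *s F t) + inverse (t ^ n1) *s F' t
    = cvcross (laurent n1 K t) (omega m c (laurent n1 K t)) + cvcross (laurent n2 P t) (cvec a)"
    unfolding vec_eq_iff
    using DERIV_unique[OF laurent_vec_nth_has_field_derivative[OF summable_K t] ode_K[OF t]] by blast
  then show ?thesis
    by (simp only: laurent_eq_vpowser[OF summable_K t] laurent_eq_vpowser[OF summable_P t]
        cvcross_smult_left cvcross_smult_right omega_smult)
qed

lemma regular_P_eq:
  assumes t: "0 < norm t" "norm t < r"
  shows "inverse (t ^ (n2 + 1)) *s (- of_nat n2 *s G t) + inverse (t ^ n2) *s G' t
    = inverse (t ^ n1) *s (inverse (t ^ n2) *s cvcross (G t) (omega m c (F t)))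
      + inverse (t ^ n1) *s (complex_of_real k *s cvcross (F t) (cvec a))"
proof -
  have "inverse (t ^ (n2 + 1)) *s (- of_nat n2 *s G t) + inverse (t ^ n2) *s G' t
    = cvcross (laurent n2 P t) (omega m c (laurent n1 K t))
      + complex_of_real k *s cvcross (laurent n1 K t) (cvec a)"
    unfolding vec_eq_iff
    using DERIV_unique[OF laurent_vec_nth_has_field_derivative[OF summable_P t] ode_P[OF t]] by blast
  then show ?thesis
    by (simp only: laurent_eq_vpowser[OF summable_K t] laurent_eq_vpowser[OF summable_P t]
        cvcross_smult_left cvcross_smult_right omega_smult smult_lcommute[of "complex_of_real k"])
qed

lemma rescaled_P_eq:
  "\<forall>\<^sub>F t in at 0. t ^ (n1 - 1) *s (- of_nat n2 *s G t) + t ^ n1 *s G' t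
    = cvcross (G t) (omega m c (F t)) + t ^ n2 *s (complex_of_real k *s cvcross (F t) (cvec a))"
proof (rule eventually_at_0_if_punctured_disc[OF r_pos])
  fix t :: complex
  assume t: "0 < norm t" "norm t < r"
  have "t \<noteq> 0" "n2 + 1 \<le> n1 + n2" "n2 \<le> n1 + n2" "n1 \<le> n1 + n2" "n2 \<le> n1 + n2 - n1"
    using t n1_pos by auto
  note cancel = power_smult_inverse_power[OF this(1,2)] power_smult_inverse_power[OF this(1,3)]
    power_smult_inverse_power[OF this(1,4)] power_smult_inverse_power[OF this(1,5)]
  have "t ^ (n1 + n2) *s (inverse (t ^ (n2 + 1)) *s (- of_nat n2 *s G t) + inverse (t ^ n2) *s G' t)
    = t ^ (n1 + n2) *s (inverse (t ^ n1) *s (inverse (t ^ n2) *s cvcross (G t) (omega m c (F t)))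
      + inverse (t ^ n1) *s (complex_of_real k *s cvcross (F t) (cvec a)))"
    using regular_P_eq[OF t] by (rule arg_cong)
  then show "t ^ (n1 - 1) *s (- of_nat n2 *s G t) + t ^ n1 *s G' t
    = cvcross (G t) (omega m c (F t)) + t ^ n2 *s (complex_of_real k *s cvcross (F t) (cvec a))"
    by (simp only: vector_add_ldistrib cancel) simp
qed

lemma leading_order_P: "0 ^ (n1 - 1) *s (- of_nat n2 *s P 0) = cvcross (P 0) (omega m c (K 0))"
  using eventually_eq_imp_eq_at[OF rescaled_P_eq] n1_pos n2_pos
  by (simp add: continuous_intros power_0_left)

lemma n1_eq_1:
  assumes "cvcross (omega m c (K 0)) (P 0) \<noteq> 0"
  shows "n1 = 1"
proof (rule ccontr)
  assume "n1 \<noteq> 1"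
  with n1_pos have "(0::complex) ^ (n1 - 1) = 0"
    by simp
  then have "cvcross (P 0) (omega m c (K 0)) = 0"
    using leading_order_P by (simp only:) simp
  with assms show False
    by (simp add: cvcross_commute[of "P 0"])
qed

lemma rescaled_K_eq:
  assumes "n1 = 1" and "n2 \<le> j + 2 \<or> a = 0"
  shows "\<forall>\<^sub>F t in at 0. t ^ j *s (- F t) + t ^ (j + 1) *s F' t
    = t ^ j *s cvcross (F t) (omega m c (F t)) + t ^ (j + 2 - n2) *s cvcross (G t) (cvec a)"
proof (rule eventually_at_0_if_punctured_disc[OF r_pos])
  fix t :: complex
  assume t: "0 < norm t" "norm t < r"
  have "t \<noteq> 0" "1 + 1 \<le> j + 2" "1 \<le> j + 2" "1 \<le> j + 2 - 1"
    using t by auto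
  note cancel = power_smult_inverse_power[OF this(1,2)] power_smult_inverse_power[OF this(1,3)]
    power_smult_inverse_power[OF this(1,4)]
  have coupling: "t ^ (j + 2) *s (inverse (t ^ n2) *s cvcross (G t) (cvec a))
    = t ^ (j + 2 - n2) *s cvcross (G t) (cvec a)"
  proof (cases "a = 0")
    case False
    with assms(2) have "n2 \<le> j + 2"
      by simp
    then show ?thesis
      by (rule power_smult_inverse_power[OF \<open>t \<noteq> 0\<close>])
  qed simp
  have "t ^ (j + 2) *s (inverse (t ^ (n1 + 1)) *s (- of_nat n1 *s F t) + inverse (t ^ n1) *s F' t)
    = t ^ (j + 2) *s (inverse (t ^ n1) *s (inverse (t ^ n1) *s cvcross (F t) (omega m c (F t)))
      + inverse (t ^ n2) *s cvcross (G t) (cvec a))"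
    using regular_K_eq[OF t] by (rule arg_cong)
  then show "t ^ j *s (- F t) + t ^ (j + 1) *s F' t
    = t ^ j *s cvcross (F t) (omega m c (F t)) + t ^ (j + 2 - n2) *s cvcross (G t) (cvec a)"
    by (simp only: \<open>n1 = 1\<close> vector_add_ldistrib cancel coupling) simp
qed

lemma leading_order_K:
  assumes "n1 = 1" and "n2 \<le> j + 2 \<or> a = 0"
  shows "0 ^ j *s (- K 0)
    = 0 ^ j *s cvcross (K 0) (omega m c (K 0)) + 0 ^ (j + 2 - n2) *s cvcross (P 0) (cvec a)"
  using eventually_eq_imp_eq_at[OF rescaled_K_eq[OF assms]] by (simp add: continuous_intros)

lemma n2_eq_2:
  assumes "n1 = 1" and "K 0 \<noteq> 0" and "P 0 \<noteq> 0"
  shows "n2 = 2"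
proof -
  have "cvcross (K 0) (omega m c (K 0)) = - K 0" if "n2 = 1 \<or> a = 0"
    using leading_order_K[OF \<open>n1 = 1\<close>, of 0] that by auto
  with \<open>K 0 \<noteq> 0\<close> have "n2 \<noteq> 1" "a \<noteq> 0"
    using cvcross_omega_self_eq_neg_imp_0 by blast+
  have "\<not> 3 \<le> n2"
  proof
    assume "3 \<le> n2"
    then have "n2 \<le> (n2 - 2) + 2"
      by simp
    with \<open>3 \<le> n2\<close> have "cvcross (P 0) (cvec a) = 0"
      using leading_order_K[OF \<open>n1 = 1\<close>, of "n2 - 2"] by (simp add: power_0_left)
    moreover have "cvcross (P 0) (omega m c (K 0)) = (- of_nat n2) *s P 0"
      using leading_order_P \<open>n1 = 1\<close> by simp
    ultimately show False
      using eigenvector_parallel_to_real_eq_0[of "P 0" _ "- of_nat n2" a]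
        \<open>a \<noteq> 0\<close> \<open>3 \<le> n2\<close> \<open>P 0 \<noteq> 0\<close>
      by simp
  qed
  with \<open>n2 \<noteq> 1\<close> n2_pos show "n2 = 2"
    by simp
qed

end

theorem lemma1:
  fixes k c m :: real and a :: "real^3"
    and n1 n2 :: nat and K P :: "nat \<Rightarrow> complex^3" and r :: real
  assumes hk: "k \<in> {0, 1, -1}"
    and hc: "c \<noteq> 0" and hm: "m \<ge> 0"
    and hn1: "n1 \<ge> 1" and hn2: "n2 \<ge> 1"
    and hK0: "K 0 \<noteq> 0" and hP0: "P 0 \<noteq> 0"
    and hr: "r > 0"
    and hconv: "\<forall>t. 0 < norm t \<and> norm t < r \<longrightarrow>
                   summable (\<lambda>j. (t ^ j) *s K j) \<and> summable (\<lambda>j. (t ^ j) *s P j)"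
    and hodeK: "\<forall>t. 0 < norm t \<and> norm t < r \<longrightarrow> (\<forall>i.
       ((\<lambda>s. laurent n1 K s $ i) has_field_derivative
          (cvcross (laurent n1 K t) (omega m c (laurent n1 K t))
           + cvcross (laurent n2 P t) (cvec a)) $ i) (at t))"
    and hodeP: "\<forall>t. 0 < norm t \<and> norm t < r \<longrightarrow> (\<forall>i.
       ((\<lambda>s. laurent n2 P s $ i) has_field_derivative
          (cvcross (laurent n2 P t) (omega m c (laurent n1 K t))
           + complex_of_real k *s cvcross (laurent n1 K t) (cvec a)) $ i) (at t))"
    and hnd: "cvcross (omega m c (K 0)) (P 0) \<noteq> 0"
  shows "n1 = 1 \<and> n2 = 2"
proof -
  interpret laurent_solution m c k a n1 n2 K P r
    using hr hn1 hn2 hconv hodeK hodeP by unfold_locales auto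
  have "n1 = 1"
    using hnd by (rule n1_eq_1)
  with hK0 hP0 show ?thesis
    using n2_eq_2 by blast
qed

end
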